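(* Let $N\ge 2$, $\delta>0$, and let $a$ be a $C^2$ function on the ball $B'_\delta(0)\subset\mathbb{R}^{N-1}$ with $a(0)=0$, $\nabla a(0)=0$, and $a$ not identically zero on $B'_\delta(0)$. Let $(p_n)_n$ be a sequence in $\mathbb{R}^N$ such that for some constant $C$ and all $n$ and all $x'\in B'_\delta(0)$, $$|p_n\cdot(x',a(x'))|\le C.$$ Then $(p_n)_n$ is bounded. *)

theory Defs
  imports "HOL-Analysis.Analysis"
begin

definition C2_on :: "'a::euclidean_space set \<Rightarrow> ('a \<Rightarrow> real) \<Rightarrow> bool" where
  "C2_on S f \<longleftrightarrow>
     (\<exists>D :: 'a \<Rightarrow> ('a \<Rightarrow>\<^sub>L real). \<exists>D2 :: 'a \<Rightarrow> ('a \<Rightarrow>\<^sub>L ('a \<Rightarrow>\<^sub>L real)).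
        (\<forall>x\<in>S. (f has_derivative blinfun_apply (D x)) (at x)) \<and>
        (\<forall>x\<in>S. (D has_derivative blinfun_apply (D2 x)) (at x)) \<and>
        continuous_on S D2)"

end

theory Submission
  imports Defs
begin

text \<open>Write \<open>p n = (q n, s n)\<close>, so the hypothesis reads \<open>\<bar>q n \<bullet> x + s n * a x\<bar> \<le> C\<close>.
Pick \<open>x\<^sub>0\<close> with \<open>a x\<^sub>0 \<noteq> 0\<close>. Since \<open>a 0 = 0\<close> and \<open>\<nabla>a 0 = 0\<close>, for small \<open>t > 0\<close>
the quotient \<open>a (t x\<^sub>0) / t\<close> is at most half of \<open>\<bar>a x\<^sub>0\<bar>\<close>; comparing the bound at \<open>x\<^sub>0\<close>
with the bound at \<open>t x\<^sub>0\<close> divided by \<open>t\<close> cancels the linear part and bounds \<open>s n\<close>.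
Then, \<open>a\<close> being bounded on a smaller closed ball, testing at \<open>x\<close> parallel to \<open>q n\<close> bounds \<open>q n\<close>.\<close>

lemma C2_on_imp_continuous_on: "C2_on S f \<Longrightarrow> continuous_on S f"
  unfolding C2_on_def
  by (meson continuous_at_imp_continuous_on has_derivative_continuous)

lemma has_derivative_zero_imp_ray_quotient_tendsto_0:
  fixes a :: "'a::real_normed_vector \<Rightarrow> real"
  assumes "(a has_derivative (\<lambda>h. 0)) (at 0)" and "a 0 = 0"
  shows "((\<lambda>t. a (t *\<^sub>R x) / t) \<longlongrightarrow> 0) (at_right 0)"
proof -
  have "((\<lambda>t. t *\<^sub>R x) has_derivative (\<lambda>h. h *\<^sub>R x)) (at 0)"
    by (auto intro!: derivative_eq_intros)
  from has_derivative_compose[OF this, of a "\<lambda>h. 0"] assms(1)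
  have "((\<lambda>t. a (t *\<^sub>R x)) has_field_derivative 0) (at 0)"
    by (auto simp: o_def intro: has_derivative_imp_has_field_derivative)
  then have "((\<lambda>t. a (t *\<^sub>R x) / t) \<longlongrightarrow> 0) (at 0)"
    using assms(2) by (simp add: has_field_derivative_iff)
  then show ?thesis
    by (rule tendsto_mono[OF at_le, rotated]) simp
qed

lemma has_derivative_zero_obtains_ray_point:
  fixes a :: "'a::real_normed_vector \<Rightarrow> real"
  assumes "(a has_derivative (\<lambda>h. 0)) (at 0)" and "a 0 = 0" and "a x \<noteq> 0"
  obtains t where "0 < t" "t < 1" "\<bar>a (t *\<^sub>R x) / t\<bar> < \<bar>a x\<bar> / 2"
proof -
  have "\<bar>a x\<bar> / 2 > 0"
    using assms(3) by simp
  from tendsto_iff[THEN iffD1, OF has_derivative_zero_imp_ray_quotient_tendsto_0[OF assms(1,2)],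
      rule_format, OF this]
  have "\<forall>\<^sub>F t in at_right 0. \<bar>a (t *\<^sub>R x) / t\<bar> < \<bar>a x\<bar> / 2"
    by simp
  moreover have "\<forall>\<^sub>F t in at_right (0::real). 0 < t \<and> t < 1"
    by (auto simp: eventually_at_right_field intro: exI[of _ 1])
  ultimately have "\<forall>\<^sub>F t in at_right 0. 0 < t \<and> t < 1 \<and> \<bar>a (t *\<^sub>R x) / t\<bar> < \<bar>a x\<bar> / 2"
    by eventually_elim auto
  then show ?thesis
    using that eventually_happens trivial_limit_at_right_real by blast
qed

text \<open>Dividing the second bound by \<open>t\<close> and subtracting it from the first cancels \<open>q\<close>,
leaving \<open>s (y - z / t)\<close>, and \<open>\<bar>y - z / t\<bar> \<ge> \<bar>y\<bar> / 2\<close>.\<close>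

lemma abs_coeff_le_by_nonlinearity:
  fixes q x :: "'a::real_inner" and s y z t C :: real
  assumes "\<bar>q \<bullet> x + s * y\<bar> \<le> C" and "\<bar>q \<bullet> (t *\<^sub>R x) + s * z\<bar> \<le> C"
    and "t > 0" and "\<bar>z / t\<bar> \<le> \<bar>y\<bar> / 2" and "y \<noteq> 0"
  shows "\<bar>s\<bar> \<le> 2 * (C + C / t) / \<bar>y\<bar>"
proof -
  have cancel: "(q \<bullet> x + s * y) - (q \<bullet> (t *\<^sub>R x) + s * z) / t = s * (y - z / t)"
    using \<open>t > 0\<close> by (simp add: inner_scaleR_right field_simps)
  have "\<bar>(q \<bullet> (t *\<^sub>R x) + s * z) / t\<bar> \<le> C / t"
    using assms(2,3) by (simp add: abs_div divide_right_mono)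
  with assms(1) have "\<bar>s * (y - z / t)\<bar> \<le> C + C / t"
    unfolding cancel[symmetric] by linarith
  moreover have "\<bar>y\<bar> / 2 \<le> \<bar>y - z / t\<bar>"
    using assms(4) by linarith
  ultimately have "\<bar>s\<bar> * (\<bar>y\<bar> / 2) \<le> C + C / t"
    by (metis abs_ge_zero abs_mult mult_left_mono order_trans)
  then show ?thesis
    using \<open>y \<noteq> 0\<close> by (simp add: field_simps)
qed

lemma norm_le_of_bounded_on_cball:
  fixes q :: "'a::real_inner" and a :: "'a \<Rightarrow> real"
  assumes bound: "\<And>x. x \<in> cball 0 r \<Longrightarrow> \<bar>q \<bullet> x + s * a x\<bar> \<le> C"
    and a_bound: "\<And>x. x \<in> cball 0 r \<Longrightarrow> \<bar>a x\<bar> \<le> M"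
    and "r \<ge> 0"
  shows "r * norm q \<le> C + \<bar>s\<bar> * M"
proof (cases "q = 0")
  case True
  have "\<bar>s * a 0\<bar> \<le> C" "\<bar>a 0\<bar> \<le> M"
    using bound[of 0] a_bound[of 0] \<open>r \<ge> 0\<close> by simp_all
  moreover have "0 \<le> \<bar>s\<bar> * M"
    using \<open>\<bar>a 0\<bar> \<le> M\<close> by simp
  ultimately show ?thesis
    using True by simp
next
  case False
  define x where "x = (r / norm q) *\<^sub>R q"
  have x: "x \<in> cball 0 r"
    using False \<open>r \<ge> 0\<close> by (simp add: x_def)
  have "q \<bullet> x = r * norm q"
    using False by (simp add: x_def inner_scaleR_right dot_square_norm power2_eq_square)
  moreover have "\<bar>s * a x\<bar> \<le> \<bar>s\<bar> * M"
    using a_bound[OF x] by (simp add: abs_mult mult_left_mono)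
  ultimately show ?thesis
    using bound[OF x] by linarith
qed

lemma bounded_prodI: "bounded (fst ` A) \<Longrightarrow> bounded (snd ` A) \<Longrightarrow> bounded A"
  by (metis bounded_Times bounded_subset subset_fst_snd)

theorem proposition3p1:
  fixes a :: "real ^ 'n \<Rightarrow> real"
    and \<delta> C :: real
    and p :: "nat \<Rightarrow> (real ^ 'n) \<times> real"
  assumes "\<delta> > 0"
    and "C2_on (ball 0 \<delta>) a"
    and "a 0 = 0"
    and "(a has_derivative (\<lambda>h. 0)) (at 0)"
    and "\<exists>x\<in>ball 0 \<delta>. a x \<noteq> 0"
    and "\<And>n x. x \<in> ball 0 \<delta> \<Longrightarrow> \<bar>p n \<bullet> (x, a x)\<bar> \<le> C"
  shows "bounded (range p)"
proof -
  have bound: "\<bar>fst (p n) \<bullet> x + snd (p n) * a x\<bar> \<le> C" if "x \<in> ball 0 \<delta>" for n x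
    using assms(6)[OF that, of n] by (cases "p n") simp
  obtain x\<^sub>0 where x\<^sub>0: "x\<^sub>0 \<in> ball 0 \<delta>" "a x\<^sub>0 \<noteq> 0"
    using assms(5) by blast
  then obtain t where t: "0 < t" "t < 1" "\<bar>a (t *\<^sub>R x\<^sub>0) / t\<bar> < \<bar>a x\<^sub>0\<bar> / 2"
    using has_derivative_zero_obtains_ray_point[OF assms(4,3)] by metis
  have "t *\<^sub>R x\<^sub>0 \<in> ball 0 \<delta>"
    using x\<^sub>0(1) t mult_left_le_one_le[of "norm x\<^sub>0" t] by simp
  define S where "S = 2 * (C + C / t) / \<bar>a x\<^sub>0\<bar>"
  have snd_bound: "\<bar>snd (p n)\<bar> \<le> S" for n
    unfolding S_def
    using abs_coeff_le_by_nonlinearity[OF bound bound, OF x\<^sub>0(1) \<open>t *\<^sub>R x\<^sub>0 \<in> ball 0 \<delta>\<close>] t x\<^sub>0(2)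
    by simp
  have "continuous_on (cball 0 (\<delta> / 2)) a"
    using \<open>\<delta> > 0\<close> by (auto intro: continuous_on_subset[OF C2_on_imp_continuous_on[OF assms(2)]])
  then obtain M where "0 \<le> M" and M: "\<And>x. x \<in> cball 0 (\<delta> / 2) \<Longrightarrow> \<bar>a x\<bar> \<le> M"
    by (metis compact_cball continuous_on_compact_bound real_norm_def)
  have fst_bound: "norm (fst (p n)) \<le> 2 * (C + S * M) / \<delta>" for n
  proof -
    have "\<delta> / 2 * norm (fst (p n)) \<le> C + \<bar>snd (p n)\<bar> * M"
      using \<open>\<delta> > 0\<close> by (intro norm_le_of_bounded_on_cball[where a = a] M bound) auto
    also have "\<dots> \<le> C + S * M"
      using snd_bound[of n] \<open>0 \<le> M\<close> by (simp add: mult_right_mono)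
    finally show ?thesis
      using \<open>\<delta> > 0\<close> by (simp add: field_simps)
  qed
  have "bounded (fst ` range p)" "bounded (snd ` range p)"
    using fst_bound snd_bound by (auto simp: bounded_iff)
  then show ?thesis
    by (rule bounded_prodI)
qed

end
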